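(* Let $m\ge 2$ and let $K_1,K_2$ be Latin squares on $[m]$. If $K_1$ and $K_2$ are main class isotopic, then the matroids $M[K_1]$ and $M[K_2]$ are isomorphic. If $K_1$ is not main class isotopic to $K_2$, then $M[K_1]$ is not isomorphic to $M[K_2]$.
   Context: A Latin square of order $m$ on $[m]$ is an $m\times m$ matrix $K=(k_{i,j})$ with entries in $[m]$ such that each symbol occurs exactly once in each row and each column. More generally, given $m$-sets $E_1,E_2,E_3$, a Latin square with rows indexed by $E_1$, columns by $E_2$ and symbols in $E_3$ has $T(K)=\{\{x_1,x_2,x_3\}: x_i\in E_i,\ k_{x_1,x_2}=x_3\}$. Two Latin squares are isotopic if one is obtained from the other by permuting rows, permuting columns, and applying a bijection of the symbol set. For a permutation $\sigma$ of $\{1,2,3\}$, the $\sigma$-conjugate $K_\sigma$ is the Latin square with rows indexed by $E_{\sigma 1}$, columns by $E_{\sigma2}$, symbols in $E_{\sigma 3}$, defined by $T(K_\sigma)=T(K)$. Two Latin squares are main class isotopic if one is isotopic to some conjugate of the other. For a Latin square $K=(k_{i,j})$ on $[m]$, let $\mathcal{C}[K]=\{\{i, m+j, 2m+k_{i,j}\}: 1\le i,j\le m\}$, a family of $3$-subsets of $[3m]$. For $m\ge 2$, $M[K]$ denotes the unique simple matroid on $[3m]$ of rank $3$ whose family of all $3$-element circuits equals $\mathcal{C}[K]$. *)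

theory Defs
  imports "HOL-Combinatorics.Permutations"
begin

definition matroid :: "'a set \<Rightarrow> 'a set set \<Rightarrow> bool" where
  "matroid E I \<longleftrightarrow> finite E \<and> (\<forall>X\<in>I. X \<subseteq> E) \<and> {} \<in> I \<and>
     (\<forall>X Y. X \<in> I \<and> Y \<subseteq> X \<longrightarrow> Y \<in> I) \<and>
     (\<forall>X\<in>I. \<forall>Y\<in>I. card X < card Y \<longrightarrow> (\<exists>e\<in>Y - X. insert e X \<in> I))"

definition matroid_circuit :: "'a set \<Rightarrow> 'a set set \<Rightarrow> 'a set \<Rightarrow> bool" where
  "matroid_circuit E I C \<longleftrightarrow> C \<subseteq> E \<and> C \<notin> I \<and> (\<forall>D. D \<subset> C \<longrightarrow> D \<in> I)"

definition matroid_rank :: "'a set set \<Rightarrow> nat" where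
  "matroid_rank I = Max (card ` I)"

definition simple_matroid :: "'a set \<Rightarrow> 'a set set \<Rightarrow> bool" where
  "simple_matroid E I \<longleftrightarrow> matroid E I \<and> (\<forall>X. X \<subseteq> E \<and> card X \<le> 2 \<longrightarrow> X \<in> I)"

definition matroid_iso :: "'a set \<Rightarrow> 'a set set \<Rightarrow> 'b set \<Rightarrow> 'b set set \<Rightarrow> bool" where
  "matroid_iso E1 I1 E2 I2 \<longleftrightarrow>
     (\<exists>f. bij_betw f E1 E2 \<and> (\<forall>X. X \<subseteq> E1 \<longrightarrow> (X \<in> I1 \<longleftrightarrow> f ` X \<in> I2)))"

text \<open>A Latin square on [m] = {1..m} is given by its entries K i j for i, j in [m]
  (values outside [m] x [m] are irrelevant).\<close>
definition latin_square :: "nat \<Rightarrow> (nat \<Rightarrow> nat \<Rightarrow> nat) \<Rightarrow> bool" where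
  "latin_square m K \<longleftrightarrow>
     (\<forall>i\<in>{1..m}. bij_betw (\<lambda>j. K i j) {1..m} {1..m}) \<and>
     (\<forall>j\<in>{1..m}. bij_betw (\<lambda>i. K i j) {1..m} {1..m})"

definition latin_triples :: "nat \<Rightarrow> (nat \<Rightarrow> nat \<Rightarrow> nat) \<Rightarrow> (nat \<times> nat \<times> nat) set" where
  "latin_triples m K = {(i, j, K i j) | i j. i \<in> {1..m} \<and> j \<in> {1..m}}"

definition tri_nth :: "nat \<times> nat \<times> nat \<Rightarrow> nat \<Rightarrow> nat" where
  "tri_nth t n = (if n = 0 then fst t else if n = 1 then fst (snd t) else snd (snd t))"

definition conj_triple :: "(nat \<Rightarrow> nat) \<Rightarrow> nat \<times> nat \<times> nat \<Rightarrow> nat \<times> nat \<times> nat" where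
  "conj_triple \<sigma> t = (tri_nth t (\<sigma> 0), tri_nth t (\<sigma> 1), tri_nth t (\<sigma> 2))"

definition main_class_isotopic :: "nat \<Rightarrow> (nat \<Rightarrow> nat \<Rightarrow> nat) \<Rightarrow> (nat \<Rightarrow> nat \<Rightarrow> nat) \<Rightarrow> bool" where
  "main_class_isotopic m K1 K2 \<longleftrightarrow>
     (\<exists>\<sigma> \<alpha> \<beta> \<gamma>. \<sigma> permutes {0,1,2} \<and>
        bij_betw \<alpha> {1..m} {1..m} \<and> bij_betw \<beta> {1..m} {1..m} \<and> bij_betw \<gamma> {1..m} {1..m} \<and>
        latin_triples m K2 =
          (\<lambda>(x, y, z). (\<alpha> x, \<beta> y, \<gamma> z)) ` (conj_triple \<sigma> ` latin_triples m K1))"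

definition latin_circuits :: "nat \<Rightarrow> (nat \<Rightarrow> nat \<Rightarrow> nat) \<Rightarrow> nat set set" where
  "latin_circuits m K = {{i, m + j, 2 * m + K i j} | i j. i \<in> {1..m} \<and> j \<in> {1..m}}"

text \<open>M[K]: the unique simple rank-3 matroid on [3m] whose 3-element circuits are exactly C[K]
  (represented by its family of independent sets; the ground set is {1..3m}).\<close>
definition latin_matroid :: "nat \<Rightarrow> (nat \<Rightarrow> nat \<Rightarrow> nat) \<Rightarrow> nat set set" where
  "latin_matroid m K = (THE I. simple_matroid {1..3*m} I \<and> matroid_rank I = 3 \<and>
      {C. matroid_circuit {1..3*m} I C \<and> card C = 3} = latin_circuits m K)"

end

theory Submission
  imports Defs
begin

text \<open>
  A set of at most two points, or of three points that is not one of the triples of C[K], is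
  independent; this is a simple matroid of rank 3 because two triples of a Latin square share
  at most one point, and it is the only candidate for M[K]. So M[K1] and M[K2] are isomorphic
  iff some permutation f of [3m] maps C[K1] onto C[K2].

  Two distinct points lie on a common triple iff they are in different blocks among the rows
  {1..m}, the columns {m+1..2m} and the symbols {2m+1..3m}. Hence such an f preserves the
  partition into blocks: it permutes the blocks by some \<pi> and acts by a bijection inside
  each block. A map of this shape sends the triple of (i, j, k) to the triple of the
  \<pi>\<inverse>-conjugate of (i, j, k) with its coordinates relabelled by those bijections,
  which is precisely a main class isotopy; conversely every main class isotopy gives such an f.
\<close>

section \<open>Simple matroids of rank 3 given by their dependent triples\<close>

definition rank3_indep :: "'a set \<Rightarrow> 'a set set \<Rightarrow> 'a set set" where
  "rank3_indep E \<C> = {X. X \<subseteq> E \<and> (card X \<le> 2 \<or> card X = 3 \<and> X \<notin> \<C>)}"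

lemma rank3_indep_simple_matroid:
  assumes "finite E"
    and lines: "\<And>C D x y. C \<in> \<C> \<Longrightarrow> D \<in> \<C> \<Longrightarrow> x \<noteq> y \<Longrightarrow> {x, y} \<subseteq> C \<inter> D \<Longrightarrow> C = D"
  shows "simple_matroid E (rank3_indep E \<C>)"
proof -
  let ?I = "rank3_indep E \<C>"
  have exchange: "\<exists>e\<in>Y - X. insert e X \<in> ?I"
    if X: "X \<in> ?I" and Y: "Y \<in> ?I" and less: "card X < card Y" for X Y
  proof -
    have XY: "X \<subseteq> E" "Y \<subseteq> E" "card Y \<le> 3" using X Y by (auto simp: rank3_indep_def)
    then have fin: "finite X" "finite Y" using assms(1) finite_subset by blast+
    obtain e1 where e1: "e1 \<in> Y - X"
      using less card_mono[OF fin(1)] by (metis Diff_eq_empty_iff ex_in_conv not_le)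
    show ?thesis
    proof (cases "insert e1 X \<in> ?I")
      case True
      then show ?thesis using e1 by blast
    next
      case False
      then have X2: "card X = 2" and C1: "insert e1 X \<in> \<C>"
        using e1 XY less fin by (auto simp: rank3_indep_def)
      then have "card Y = card (insert e1 X)" "Y \<notin> \<C>"
        using e1 fin XY less Y by (auto simp: rank3_indep_def)
      then have "\<not> Y \<subseteq> insert e1 X" using C1 card_subset_eq fin by (metis finite_insert)
      then obtain e2 where e2: "e2 \<in> Y - insert e1 X" by blast
      have "insert e2 X \<in> ?I"
      proof (rule ccontr)
        assume "insert e2 X \<notin> ?I"
        then have C2: "insert e2 X \<in> \<C>" using e2 XY X2 fin by (auto simp: rank3_indep_def)
        obtain x y where "X = {x, y}" "x \<noteq> y" using X2 card_2_iff by metis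
        then have "insert e1 X = insert e2 X" using lines[OF C1 C2] by blast
        then show False using e2 by blast
      qed
      then show ?thesis using e2 by blast
    qed
  qed
  have "matroid E ?I"
    unfolding matroid_def
  proof (intro conjI ballI allI impI)
    fix X Y assume "X \<in> ?I \<and> Y \<subseteq> X"
    then show "Y \<in> ?I"
      using card_mono[of X Y] card_subset_eq[of X Y] finite_subset[OF _ assms(1)]
      by (fastforce simp: rank3_indep_def)
  qed (use assms(1) exchange in \<open>auto simp: rank3_indep_def\<close>)
  then show ?thesis by (auto simp: simple_matroid_def rank3_indep_def)
qed

lemma rank3_indep_circuits:
  assumes "\<And>C. C \<in> \<C> \<Longrightarrow> C \<subseteq> E \<and> card C = 3"
  shows "{C. matroid_circuit E (rank3_indep E \<C>) C \<and> card C = 3} = \<C>"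
proof (intro equalityI subsetI)
  fix C assume C: "C \<in> \<C>"
  then have "C \<subseteq> E" "card C = 3" using assms by auto
  moreover have "D \<in> rank3_indep E \<C>" if "D \<subset> C" for D
    using psubset_card_mono[OF _ that] that \<open>C \<subseteq> E\<close> \<open>card C = 3\<close>
    by (auto simp: rank3_indep_def card_ge_0_finite)
  ultimately show "C \<in> {C. matroid_circuit E (rank3_indep E \<C>) C \<and> card C = 3}"
    using C by (simp add: matroid_circuit_def rank3_indep_def)
qed (auto simp: matroid_circuit_def rank3_indep_def)

lemma matroid_rank_rank3_indep:
  assumes "finite E" and "X \<subseteq> E" "card X = 3" "X \<notin> \<C>"
  shows "matroid_rank (rank3_indep E \<C>) = 3"
  unfolding matroid_rank_def
proof (rule Max_eqI)
  have "rank3_indep E \<C> \<subseteq> Pow E" by (auto simp: rank3_indep_def)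
  then show "finite (card ` rank3_indep E \<C>)" using assms(1) finite_subset by blast
  show "3 \<in> card ` rank3_indep E \<C>"
    using assms(2-4) by (force simp: rank3_indep_def)
qed (auto simp: rank3_indep_def)

lemma simple_rank3_matroid_eq_rank3_indep:
  assumes simple: "simple_matroid E I" and rank: "matroid_rank I = 3"
    and circuits: "{C. matroid_circuit E I C \<and> card C = 3} = \<C>"
  shows "I = rank3_indep E \<C>"
proof -
  have M: "matroid E I" and small: "\<And>X. X \<subseteq> E \<Longrightarrow> card X \<le> 2 \<Longrightarrow> X \<in> I"
    using simple by (auto simp: simple_matroid_def)
  have sub: "X \<subseteq> E" if "X \<in> I" for X
    using M that by (auto simp: matroid_def)
  have "finite I"
    using M finite_subset[of I "Pow E"] by (auto simp: matroid_def)
  then have le3: "card X \<le> 3" if "X \<in> I" for X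
    using Max_ge[OF finite_imageI[OF \<open>finite I\<close>] imageI[OF that], of card] rank
    by (simp add: matroid_rank_def)
  have circuit3: "matroid_circuit E I X" if X: "X \<subseteq> E" "card X = 3" "X \<notin> I" for X
  proof -
    have "D \<in> I" if "D \<subset> X" for D
      using small[of D] psubset_card_mono[OF _ that] X that by (simp add: card_ge_0_finite)
    then show ?thesis using X by (simp add: matroid_circuit_def)
  qed
  show ?thesis
  proof (intro equalityI subsetI)
    fix X assume X: "X \<in> I"
    then have "X \<notin> \<C>" using circuits by (auto simp: matroid_circuit_def)
    then show "X \<in> rank3_indep E \<C>"
      using sub[OF X] le3[OF X] by (auto simp: rank3_indep_def)
  next
    fix X assume X: "X \<in> rank3_indep E \<C>"
    show "X \<in> I"
    proof (rule ccontr)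
      assume "X \<notin> I"
      then have "\<not> card X \<le> 2" using X small by (auto simp: rank3_indep_def)
      then have "card X = 3" "X \<notin> \<C>" "X \<subseteq> E" using X by (auto simp: rank3_indep_def)
      then show False using circuit3 \<open>X \<notin> I\<close> circuits by blast
    qed
  qed
qed

lemma the_simple_rank3_matroid:
  assumes "finite E"
    and lines: "\<And>C D x y. C \<in> \<C> \<Longrightarrow> D \<in> \<C> \<Longrightarrow> x \<noteq> y \<Longrightarrow> {x, y} \<subseteq> C \<inter> D \<Longrightarrow> C = D"
    and triples: "\<And>C. C \<in> \<C> \<Longrightarrow> C \<subseteq> E \<and> card C = 3"
    and "X \<subseteq> E" "card X = 3" "X \<notin> \<C>"
  shows "(THE I. simple_matroid E I \<and> matroid_rank I = 3 \<and>
      {C. matroid_circuit E I C \<and> card C = 3} = \<C>) = rank3_indep E \<C>"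
proof (rule the_equality)
  show "simple_matroid E (rank3_indep E \<C>) \<and> matroid_rank (rank3_indep E \<C>) = 3 \<and>
      {C. matroid_circuit E (rank3_indep E \<C>) C \<and> card C = 3} = \<C>"
    by (intro conjI rank3_indep_simple_matroid[OF assms(1) lines] matroid_rank_rank3_indep[OF assms(1,4-6)]
        rank3_indep_circuits[OF triples])
qed (use simple_rank3_matroid_eq_rank3_indep in blast)

lemma bij_betw_image_family_eq_iff:
  assumes f: "bij_betw f E1 E2" and "\<C>1 \<subseteq> Pow E1" "\<C>2 \<subseteq> Pow E2"
  shows "image f ` \<C>1 = \<C>2 \<longleftrightarrow> (\<forall>X\<subseteq>E1. X \<in> \<C>1 \<longleftrightarrow> f ` X \<in> \<C>2)"
proof -
  have Pow: "bij_betw (image f) (Pow E1) (Pow E2)" using bij_betw_image_Pow[OF f] .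
  show ?thesis
  proof
    assume eq: "image f ` \<C>1 = \<C>2"
    have "X \<in> \<C>1 \<longleftrightarrow> f ` X \<in> \<C>2" if "X \<subseteq> E1" for X
      unfolding eq[symmetric]
      using inj_on_image_mem_iff[OF bij_betw_imp_inj_on[OF Pow], of X \<C>1] that assms(2) by simp
    then show "\<forall>X\<subseteq>E1. X \<in> \<C>1 \<longleftrightarrow> f ` X \<in> \<C>2" by simp
  next
    assume pres: "\<forall>X\<subseteq>E1. X \<in> \<C>1 \<longleftrightarrow> f ` X \<in> \<C>2"
    show "image f ` \<C>1 = \<C>2"
    proof
      show "image f ` \<C>1 \<subseteq> \<C>2" using pres assms(2) by auto
      show "\<C>2 \<subseteq> image f ` \<C>1"
      proof
        fix C assume C: "C \<in> \<C>2"
        then have "C \<in> image f ` Pow E1"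
          using assms(3) bij_betw_imp_surj_on[OF Pow] by (simp add: subset_iff)
        then obtain X where "X \<subseteq> E1" "C = f ` X" by auto
        then show "C \<in> image f ` \<C>1" using pres C by auto
      qed
    qed
  qed
qed

lemma matroid_iso_rank3_indep_iff:
  assumes "\<And>C. C \<in> \<C>1 \<Longrightarrow> C \<subseteq> E1 \<and> card C = 3" "\<And>C. C \<in> \<C>2 \<Longrightarrow> C \<subseteq> E2 \<and> card C = 3"
  shows "matroid_iso E1 (rank3_indep E1 \<C>1) E2 (rank3_indep E2 \<C>2) \<longleftrightarrow>
    (\<exists>f. bij_betw f E1 E2 \<and> image f ` \<C>1 = \<C>2)"
proof -
  have Pow: "\<C>1 \<subseteq> Pow E1" "\<C>2 \<subseteq> Pow E2" using assms by auto
  have "(\<forall>X\<subseteq>E1. X \<in> rank3_indep E1 \<C>1 \<longleftrightarrow> f ` X \<in> rank3_indep E2 \<C>2) \<longleftrightarrow> image f ` \<C>1 = \<C>2"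
    if f: "bij_betw f E1 E2" for f
  proof -
    have "(X \<in> rank3_indep E1 \<C>1 \<longleftrightarrow> f ` X \<in> rank3_indep E2 \<C>2) \<longleftrightarrow> (X \<in> \<C>1 \<longleftrightarrow> f ` X \<in> \<C>2)"
      if X: "X \<subseteq> E1" for X
    proof -
      have "f ` X \<subseteq> E2" using X bij_betw_imp_surj_on[OF f] by blast
      moreover have "card (f ` X) = card X"
        using card_image[OF inj_on_subset[OF bij_betw_imp_inj_on[OF f] X]] .
      moreover have "X \<notin> \<C>1" "f ` X \<notin> \<C>2" if "card X \<noteq> 3"
        using that assms(1)[of X] assms(2)[of "f ` X"] \<open>card (f ` X) = card X\<close> by auto
      ultimately show ?thesis
        using X by (cases "card X = 3") (simp_all add: rank3_indep_def)
    qed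
    then have "(\<forall>X\<subseteq>E1. X \<in> rank3_indep E1 \<C>1 \<longleftrightarrow> f ` X \<in> rank3_indep E2 \<C>2) \<longleftrightarrow>
        (\<forall>X\<subseteq>E1. X \<in> \<C>1 \<longleftrightarrow> f ` X \<in> \<C>2)"
      by blast
    also have "\<dots> \<longleftrightarrow> image f ` \<C>1 = \<C>2"
      using bij_betw_image_family_eq_iff[OF f Pow] by simp
    finally show ?thesis .
  qed
  then show ?thesis unfolding matroid_iso_def by blast
qed

lemma bij_betw_common_member_iff:
  assumes f: "bij_betw f E E'" and eq: "image f ` \<C> = \<C>'" and sub: "\<C> \<subseteq> Pow E"
    and x: "x \<in> E" and y: "y \<in> E"
  shows "(\<exists>C'\<in>\<C>'. f x \<in> C' \<and> f y \<in> C') \<longleftrightarrow> (\<exists>C\<in>\<C>. x \<in> C \<and> y \<in> C)"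
proof
  assume "\<exists>C'\<in>\<C>'. f x \<in> C' \<and> f y \<in> C'"
  then obtain C where C: "C \<in> \<C>" "f x \<in> f ` C" "f y \<in> f ` C"
    unfolding eq[symmetric] by auto
  have "C \<subseteq> E" using C(1) sub by auto
  then have "x \<in> C" "y \<in> C"
    using C(2,3) inj_on_image_mem_iff[OF bij_betw_imp_inj_on[OF f]] x y by auto
  then show "\<exists>C\<in>\<C>. x \<in> C \<and> y \<in> C" using C(1) by auto
next
  assume "\<exists>C\<in>\<C>. x \<in> C \<and> y \<in> C"
  then obtain C where "C \<in> \<C>" "x \<in> C" "y \<in> C" by auto
  then show "\<exists>C'\<in>\<C>'. f x \<in> C' \<and> f y \<in> C'"
    unfolding eq[symmetric] by auto
qed

lemma bij_betw_if_inj_on_endo: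
  "finite A \<Longrightarrow> f ` A \<subseteq> A \<Longrightarrow> inj_on f A \<Longrightarrow> bij_betw f A A"
  using endo_inj_surj by (blast intro: bij_betw_imageI)

section \<open>Rows, columns and symbols as blocks of [3m]\<close>

definition block :: "nat \<Rightarrow> nat \<Rightarrow> nat" where
  "block m x = (x - 1) div m"

definition offset :: "nat \<Rightarrow> nat \<Rightarrow> nat" where
  "offset m x = (x - 1) mod m + 1"

lemma block_offset_eq:
  assumes "v \<in> {1..m}"
  shows "block m (c * m + v) = c" "offset m (c * m + v) = v"
proof -
  have m: "m \<noteq> 0" and v: "v - 1 < m" using assms by auto
  have "c * m + v - 1 = (v - 1) + c * m" using assms by simp
  then have "(c * m + v - 1) div m = c + (v - 1) div m" "(c * m + v - 1) mod m = (v - 1) mod m"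
    using m by simp_all
  then show "block m (c * m + v) = c" "offset m (c * m + v) = v"
    using v assms unfolding block_def offset_def by auto
qed

lemma block_offset_decomp:
  assumes "x \<in> {1..3 * m}"
  shows "block m x < 3" "offset m x \<in> {1..m}" "block m x * m + offset m x = x"
proof -
  have "x - 1 < 3 * m" using assms by auto
  then show "block m x < 3" by (simp add: block_def less_mult_imp_div_less)
  show "offset m x \<in> {1..m}" using assms by (auto simp: offset_def Suc_leI)
  show "block m x * m + offset m x = x"
    using assms div_mult_mod_eq[of "x - 1" m] by (simp add: block_def offset_def)
qed

lemma block_point_mem:
  assumes "(c::nat) < 3" "v \<in> {1..m}"
  shows "c * m + v \<in> {1..3 * m}"
proof -
  have "c * m \<le> 2 * m" using assms(1) by (intro mult_le_mono1) simp
  moreover have "1 \<le> v" "v \<le> m" using assms(2) by auto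
  ultimately have "1 \<le> c * m + v" "c * m + v \<le> 3 * m" by linarith+
  then show ?thesis by simp
qed

lemma block_offset_inj:
  assumes "x \<in> {1..3 * m}" "y \<in> {1..3 * m}" "block m x = block m y" "offset m x = offset m y"
  shows "x = y"
  using block_offset_decomp(3)[OF assms(1)] block_offset_decomp(3)[OF assms(2)] assms(3,4) by metis

lemma lessThan_3: "{..<3::nat} = {0, 1, 2}"
  by auto

lemma less_3_iff: "(c::nat) < 3 \<longleftrightarrow> c = 0 \<or> c = 1 \<or> c = 2"
  by auto

lemma tri_nth_mem_cube:
  assumes "t \<in> {1..m} \<times> {1..m} \<times> {1..m}" "c < 3"
  shows "tri_nth t c \<in> {1..m}"
  using assms by (auto simp: tri_nth_def less_3_iff)

lemma mem_cubeI:
  assumes "\<And>c. c < 3 \<Longrightarrow> tri_nth t c \<in> {1..m}"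
  shows "t \<in> {1..m} \<times> {1..m} \<times> {1..m}"
  using assms[of 0] assms[of 1] assms[of 2] by (cases t) (simp add: tri_nth_def)

lemma triple_eqI:
  assumes "\<And>c. c < 3 \<Longrightarrow> tri_nth s c = tri_nth t c"
  shows "s = t"
  using assms[of 0] assms[of 1] assms[of 2] by (simp add: tri_nth_def prod_eq_iff)

definition triple_points :: "nat \<Rightarrow> nat \<times> nat \<times> nat \<Rightarrow> nat set" where
  "triple_points m t = (\<lambda>c. c * m + tri_nth t c) ` {..<3}"

lemma mem_triple_points_iff:
  assumes t: "t \<in> {1..m} \<times> {1..m} \<times> {1..m}"
  shows "x \<in> triple_points m t \<longleftrightarrow> x \<in> {1..3 * m} \<and> tri_nth t (block m x) = offset m x"
proof
  assume "x \<in> triple_points m t"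
  then obtain c where c: "c < 3" and x: "x = c * m + tri_nth t c" by (auto simp: triple_points_def)
  then show "x \<in> {1..3 * m} \<and> tri_nth t (block m x) = offset m x"
    using block_point_mem[OF c tri_nth_mem_cube[OF t c]] block_offset_eq[OF tri_nth_mem_cube[OF t c]] by simp
next
  assume x: "x \<in> {1..3 * m} \<and> tri_nth t (block m x) = offset m x"
  then have "x = block m x * m + tri_nth t (block m x)" "block m x < 3"
    using block_offset_decomp by simp_all
  then show "x \<in> triple_points m t" unfolding triple_points_def by blast
qed

lemma triple_points_subset:
  "t \<in> {1..m} \<times> {1..m} \<times> {1..m} \<Longrightarrow> triple_points m t \<subseteq> {1..3 * m}"
  using mem_triple_points_iff by blast

lemma card_triple_points:
  assumes t: "t \<in> {1..m} \<times> {1..m} \<times> {1..m}"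
  shows "card (triple_points m t) = 3"
proof -
  have "inj_on (\<lambda>c. c * m + tri_nth t c) {..<3}"
    by (rule inj_onI) (metis block_offset_eq(1) lessThan_iff tri_nth_mem_cube[OF t])
  then show ?thesis by (simp add: triple_points_def card_image)
qed

lemma inj_on_triple_points: "inj_on (triple_points m) ({1..m} \<times> {1..m} \<times> {1..m})"
proof (rule inj_onI)
  fix s t
  assume s: "s \<in> {1..m} \<times> {1..m} \<times> {1..m}" and t: "t \<in> {1..m} \<times> {1..m} \<times> {1..m}"
    and eq: "triple_points m s = triple_points m t"
  show "s = t"
  proof (rule triple_eqI)
    fix c :: nat assume c: "c < 3"
    have "c * m + tri_nth s c \<in> triple_points m s"
      unfolding triple_points_def using c by blast
    then have "c * m + tri_nth s c \<in> triple_points m t" by (simp only: eq)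
    then show "tri_nth s c = tri_nth t c"
      using mem_triple_points_iff[OF t] block_offset_eq tri_nth_mem_cube[OF s c] by simp
  qed
qed

lemma triple_points_triple: "triple_points m (i, j, k) = {i, m + j, 2 * m + k}"
  by (simp add: triple_points_def tri_nth_def lessThan_3)

lemma latin_square_entry:
  "latin_square m K \<Longrightarrow> i \<in> {1..m} \<Longrightarrow> j \<in> {1..m} \<Longrightarrow> K i j \<in> {1..m}"
  unfolding latin_square_def using bij_betw_apply by metis

lemma latin_square_cancel:
  assumes "latin_square m K" "i \<in> {1..m}" "j \<in> {1..m}" "i' \<in> {1..m}" "j' \<in> {1..m}"
  shows "K i j = K i j' \<longleftrightarrow> j = j'" "K i j = K i' j \<longleftrightarrow> i = i'"
  using assms unfolding latin_square_def bij_betw_def inj_on_def by blast+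

lemma latin_square_solve:
  assumes "latin_square m K" "i \<in> {1..m}" "k \<in> {1..m}"
  shows "\<exists>j\<in>{1..m}. K i j = k" "\<exists>j\<in>{1..m}. K j i = k"
  using assms unfolding latin_square_def bij_betw_def by (metis imageE)+

lemma latin_triples_subset:
  "latin_square m K \<Longrightarrow> latin_triples m K \<subseteq> {1..m} \<times> {1..m} \<times> {1..m}"
  using latin_square_entry by (auto simp: latin_triples_def)

lemma latin_triples_eqI:
  assumes L: "latin_square m K" and "s \<in> latin_triples m K" "t \<in> latin_triples m K"
    and cd: "c < 3" "d < 3" "c \<noteq> d"
    and agree: "tri_nth s c = tri_nth t c" "tri_nth s d = tri_nth t d"
  shows "s = t"
proof -
  obtain i j i' j' where ij: "s = (i, j, K i j)" "t = (i', j', K i' j')"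
    and mem: "i \<in> {1..m}" "j \<in> {1..m}" "i' \<in> {1..m}" "j' \<in> {1..m}"
    using assms(2,3) by (auto simp: latin_triples_def)
  have "c = 0 \<and> d = 1 \<or> c = 1 \<and> d = 0 \<or> c = 0 \<and> d = 2 \<or> c = 2 \<and> d = 0 \<or> c = 1 \<and> d = 2 \<or> c = 2 \<and> d = 1"
    using cd by (auto simp: less_3_iff)
  then have "i = i' \<and> j = j'"
    using agree latin_square_cancel[OF L mem(1,2,1,4)] latin_square_cancel[OF L mem(1,2,3,2)]
    by (elim disjE conjE) (auto simp: ij tri_nth_def)
  then show ?thesis using ij by simp
qed

lemma latin_triples_exist:
  assumes L: "latin_square m K" and cd: "c < 3" "d < 3" "c \<noteq> d"
    and uv: "u \<in> {1..m}" "v \<in> {1..m}"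
  shows "\<exists>t\<in>latin_triples m K. tri_nth t c = u \<and> tri_nth t d = v"
proof -
  have row: "\<exists>t\<in>latin_triples m K. tri_nth t 0 = x \<and> tri_nth t 1 = y"
    and col: "\<exists>t\<in>latin_triples m K. tri_nth t 0 = x \<and> tri_nth t 2 = y"
    and sym: "\<exists>t\<in>latin_triples m K. tri_nth t 1 = x \<and> tri_nth t 2 = y"
    if xy: "x \<in> {1..m}" "y \<in> {1..m}" for x y
  proof -
    show "\<exists>t\<in>latin_triples m K. tri_nth t 0 = x \<and> tri_nth t 1 = y"
      using xy by (auto simp: latin_triples_def tri_nth_def)
    obtain j where "j \<in> {1..m}" "K x j = y" using latin_square_solve(1)[OF L xy] by blast
    then show "\<exists>t\<in>latin_triples m K. tri_nth t 0 = x \<and> tri_nth t 2 = y"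
      using xy by (auto simp: latin_triples_def tri_nth_def)
    obtain i where "i \<in> {1..m}" "K i x = y" using latin_square_solve(2)[OF L xy] by blast
    then show "\<exists>t\<in>latin_triples m K. tri_nth t 1 = x \<and> tri_nth t 2 = y"
      using xy by (auto simp: latin_triples_def tri_nth_def)
  qed
  have "c = 0 \<and> d = 1 \<or> c = 1 \<and> d = 0 \<or> c = 0 \<and> d = 2 \<or> c = 2 \<and> d = 0 \<or> c = 1 \<and> d = 2 \<or> c = 2 \<and> d = 1"
    using cd by (auto simp: less_3_iff)
  then show ?thesis
    using row[OF uv] row[OF uv(2,1)] col[OF uv] col[OF uv(2,1)] sym[OF uv] sym[OF uv(2,1)] by fastforce
qed

lemma latin_circuits_eq: "latin_circuits m K = triple_points m ` latin_triples m K"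
proof -
  have "latin_triples m K = (\<lambda>(i, j). (i, j, K i j)) ` ({1..m} \<times> {1..m})"
    by (auto simp: latin_triples_def)
  moreover have "latin_circuits m K = (\<lambda>(i, j). {i, m + j, 2 * m + K i j}) ` ({1..m} \<times> {1..m})"
    by (auto simp: latin_circuits_def) blast
  ultimately show ?thesis by (simp add: image_image triple_points_triple case_prod_beta)
qed

lemma latin_circuit_subset_card:
  assumes "latin_square m K" "C \<in> latin_circuits m K"
  shows "C \<subseteq> {1..3 * m} \<and> card C = 3"
  using assms triple_points_subset card_triple_points latin_triples_subset
  unfolding latin_circuits_eq by blast

lemma latin_circuits_eq_if_two_common_points:
  assumes L: "latin_square m K" and "C \<in> latin_circuits m K" "D \<in> latin_circuits m K"
    and "x \<noteq> y" "{x, y} \<subseteq> C \<inter> D"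
  shows "C = D"
proof -
  obtain s t where st: "s \<in> latin_triples m K" "t \<in> latin_triples m K"
    and CD: "C = triple_points m s" "D = triple_points m t"
    using assms(2,3) unfolding latin_circuits_eq by blast
  have mem_s: "z \<in> C \<longleftrightarrow> z \<in> {1..3 * m} \<and> tri_nth s (block m z) = offset m z"
    and mem_t: "z \<in> D \<longleftrightarrow> z \<in> {1..3 * m} \<and> tri_nth t (block m z) = offset m z" for z
    unfolding CD using mem_triple_points_iff latin_triples_subset[OF L] st by blast+
  have x: "x \<in> {1..3 * m}" "tri_nth s (block m x) = offset m x" "tri_nth t (block m x) = offset m x"
    and y: "y \<in> {1..3 * m}" "tri_nth s (block m y) = offset m y" "tri_nth t (block m y) = offset m y"
    using assms(5) mem_s mem_t by auto
  have "block m x \<noteq> block m y"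
    using block_offset_inj[OF x(1) y(1)] x(2) y(2) assms(4) by metis
  then have "s = t"
    using latin_triples_eqI[OF L st block_offset_decomp(1)[OF x(1)] block_offset_decomp(1)[OF y(1)]] x y
    by simp
  then show ?thesis using CD by simp
qed

lemma latin_circuits_collinear_iff:
  assumes L: "latin_square m K" and x: "x \<in> {1..3 * m}" and y: "y \<in> {1..3 * m}" and "x \<noteq> y"
  shows "(\<exists>C\<in>latin_circuits m K. x \<in> C \<and> y \<in> C) \<longleftrightarrow> block m x \<noteq> block m y"
proof
  assume "\<exists>C\<in>latin_circuits m K. x \<in> C \<and> y \<in> C"
  then obtain t where t: "t \<in> latin_triples m K" "x \<in> triple_points m t" "y \<in> triple_points m t"
    unfolding latin_circuits_eq by blast
  then have "tri_nth t (block m x) = offset m x" "tri_nth t (block m y) = offset m y"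
    using mem_triple_points_iff latin_triples_subset[OF L] by blast+
  then show "block m x \<noteq> block m y"
    using block_offset_inj[OF x y] \<open>x \<noteq> y\<close> by metis
next
  assume "block m x \<noteq> block m y"
  then obtain t where t: "t \<in> latin_triples m K"
    "tri_nth t (block m x) = offset m x" "tri_nth t (block m y) = offset m y"
    using latin_triples_exist[OF L block_offset_decomp(1)[OF x] block_offset_decomp(1)[OF y] _
        block_offset_decomp(2)[OF x] block_offset_decomp(2)[OF y]]
    by blast
  then have "x \<in> triple_points m t" "y \<in> triple_points m t"
    using mem_triple_points_iff latin_triples_subset[OF L] x y by blast+
  moreover have "triple_points m t \<in> latin_circuits m K"
    unfolding latin_circuits_eq using t(1) by (rule imageI)
  ultimately show "\<exists>C\<in>latin_circuits m K. x \<in> C \<and> y \<in> C" by blast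
qed

lemma latin_matroid_eq:
  assumes L: "latin_square m K" and m: "m \<ge> 2"
  shows "latin_matroid m K = rank3_indep {1..3 * m} (latin_circuits m K)"
proof -
  have "(1::nat) \<noteq> 2" "{1, 2} \<subseteq> {1..3 * m}" "block m 1 = block m 2"
    using m by (auto simp: block_def)
  then have "{1, 2, m + 1} \<notin> latin_circuits m K"
    using latin_circuits_collinear_iff[OF L, of 1 2] by blast
  moreover have "{1, 2, m + 1} \<subseteq> {1..3 * m}" "card {1, 2, m + 1} = 3" using m by auto
  ultimately show ?thesis
    unfolding latin_matroid_def
    by (intro the_simple_rank3_matroid[OF finite_atLeastAtMost] latin_circuits_eq_if_two_common_points[OF L]
        latin_circuit_subset_card[OF L])
qed

section \<open>Bijections of [3m] preserving the blocks\<close>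

definition blockwise :: "nat \<Rightarrow> (nat \<Rightarrow> nat) \<Rightarrow> (nat \<Rightarrow> nat \<Rightarrow> nat) \<Rightarrow> nat \<Rightarrow> nat" where
  "blockwise m \<pi> \<phi> x = \<pi> (block m x) * m + \<phi> (block m x) (offset m x)"

lemma bij_betw_blockwise:
  assumes \<pi>: "\<pi> permutes {..<3}" and \<phi>: "\<And>c. c < 3 \<Longrightarrow> bij_betw (\<phi> c) {1..m} {1..m}"
  shows "bij_betw (blockwise m \<pi> \<phi>) {1..3 * m} {1..3 * m}"
proof (rule bij_betw_if_inj_on_endo)
  have parts: "block m (blockwise m \<pi> \<phi> x) = \<pi> (block m x)"
    "offset m (blockwise m \<pi> \<phi> x) = \<phi> (block m x) (offset m x)"
    "blockwise m \<pi> \<phi> x \<in> {1..3 * m}"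
    if x: "x \<in> {1..3 * m}" for x
  proof -
    have c: "block m x < 3" "\<pi> (block m x) < 3"
      using block_offset_decomp(1)[OF x] permutes_in_image[OF \<pi>] by auto
    have v: "\<phi> (block m x) (offset m x) \<in> {1..m}"
      using bij_betw_apply[OF \<phi>[OF c(1)] block_offset_decomp(2)[OF x]] .
    show "block m (blockwise m \<pi> \<phi> x) = \<pi> (block m x)"
      "offset m (blockwise m \<pi> \<phi> x) = \<phi> (block m x) (offset m x)"
      "blockwise m \<pi> \<phi> x \<in> {1..3 * m}"
      unfolding blockwise_def using block_offset_eq[OF v] block_point_mem[OF c(2) v] by simp_all
  qed
  show "blockwise m \<pi> \<phi> ` {1..3 * m} \<subseteq> {1..3 * m}" using parts(3) by blast
  show "inj_on (blockwise m \<pi> \<phi>) {1..3 * m}"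
  proof (rule inj_onI)
    fix x y assume x: "x \<in> {1..3 * m}" and y: "y \<in> {1..3 * m}"
      and eq: "blockwise m \<pi> \<phi> x = blockwise m \<pi> \<phi> y"
    have "\<pi> (block m x) = \<pi> (block m y)" using parts(1)[OF x] parts(1)[OF y] eq by metis
    then have block: "block m x = block m y" using permutes_inj[OF \<pi>] by (simp add: inj_eq)
    then have "\<phi> (block m x) (offset m x) = \<phi> (block m x) (offset m y)"
      using parts(2)[OF x] parts(2)[OF y] eq by metis
    then have "offset m x = offset m y"
      using bij_betw_imp_inj_on[OF \<phi>[OF block_offset_decomp(1)[OF x]]]
        block_offset_decomp(2)[OF x] block_offset_decomp(2)[OF y] by (simp add: inj_on_eq_iff)
    then show "x = y" using block_offset_inj[OF x y block] by simp
  qed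
qed simp

lemma block_perm_if_preserves_blocks:
  assumes f: "bij_betw f {1..3 * m} {1..3 * m}" and "m > 0"
    and blocks: "\<And>x y. x \<in> {1..3 * m} \<Longrightarrow> y \<in> {1..3 * m} \<Longrightarrow>
      block m (f x) = block m (f y) \<longleftrightarrow> block m x = block m y"
  obtains \<pi> where "\<pi> permutes {..<3}" "\<And>x. x \<in> {1..3 * m} \<Longrightarrow> block m (f x) = \<pi> (block m x)"
proof -
  define \<pi> where "\<pi> c = (if c < 3 then block m (f (c * m + 1)) else c)" for c
  have one: "1 \<in> {1..m}" using \<open>m > 0\<close> by simp
  have "block m (f x) = \<pi> (block m x)" if x: "x \<in> {1..3 * m}" for x
  proof -
    have c: "block m x < 3" using block_offset_decomp(1)[OF x] .
    have "block m (block m x * m + 1) = block m x" using block_offset_eq(1)[OF one] .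
    then show ?thesis
      using blocks[OF x block_point_mem[OF c one]] c by (simp add: \<pi>_def)
  qed
  moreover have "\<pi> permutes {..<3}"
  proof (rule bij_imp_permutes)
    have "\<pi> c < 3" if "c < 3" for c
      using block_offset_decomp(1)[OF bij_betw_apply[OF f block_point_mem[OF that one]]] that
      by (simp add: \<pi>_def)
    moreover have "inj_on \<pi> {..<3}"
    proof (rule inj_onI)
      fix c d assume "c \<in> {..<3::nat}" "d \<in> {..<3::nat}" "\<pi> c = \<pi> d"
      then have "block m (f (c * m + 1)) = block m (f (d * m + 1))" by (simp add: \<pi>_def)
      then show "c = d"
        using blocks block_point_mem one block_offset_eq(1)[OF one] \<open>c \<in> {..<3}\<close> \<open>d \<in> {..<3}\<close>
        by (metis lessThan_iff)
    qed
    ultimately show "bij_betw \<pi> {..<3} {..<3}"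
      by (intro bij_betw_if_inj_on_endo) auto
  qed (simp add: \<pi>_def)
  ultimately show ?thesis using that by blast
qed

lemma blockwise_if_preserves_blocks:
  assumes f: "bij_betw f {1..3 * m} {1..3 * m}" and "m > 0"
    and blocks: "\<And>x y. x \<in> {1..3 * m} \<Longrightarrow> y \<in> {1..3 * m} \<Longrightarrow>
      block m (f x) = block m (f y) \<longleftrightarrow> block m x = block m y"
  obtains \<pi> \<phi> where "\<pi> permutes {..<3}" "\<And>c. c < 3 \<Longrightarrow> bij_betw (\<phi> c) {1..m} {1..m}"
    "\<And>x. x \<in> {1..3 * m} \<Longrightarrow> f x = blockwise m \<pi> \<phi> x"
proof -
  obtain \<pi> where \<pi>: "\<pi> permutes {..<3}"
    and block_f: "\<And>x. x \<in> {1..3 * m} \<Longrightarrow> block m (f x) = \<pi> (block m x)"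
    using block_perm_if_preserves_blocks[OF assms] by blast
  define \<phi> where "\<phi> c v = offset m (f (c * m + v))" for c v
  have fE: "f x \<in> {1..3 * m}" if "x \<in> {1..3 * m}" for x using bij_betw_apply[OF f that] .
  have "f x = blockwise m \<pi> \<phi> x" if x: "x \<in> {1..3 * m}" for x
    using block_offset_decomp(3)[OF fE[OF x]] block_offset_decomp(3)[OF x] block_f[OF x]
    by (simp add: blockwise_def \<phi>_def)
  moreover have "bij_betw (\<phi> c) {1..m} {1..m}" if c: "c < 3" for c
  proof (rule bij_betw_if_inj_on_endo)
    show "\<phi> c ` {1..m} \<subseteq> {1..m}"
      using block_offset_decomp(2)[OF fE[OF block_point_mem[OF c]]] by (auto simp: \<phi>_def)
    show "inj_on (\<phi> c) {1..m}"
    proof (rule inj_onI)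
      fix v w assume v: "v \<in> {1..m}" and w: "w \<in> {1..m}" and eq: "\<phi> c v = \<phi> c w"
      have pts: "c * m + v \<in> {1..3 * m}" "c * m + w \<in> {1..3 * m}"
        using block_point_mem[OF c v] block_point_mem[OF c w] .
      have "block m (f (c * m + v)) = block m (f (c * m + w))"
        using block_f[OF pts(1)] block_f[OF pts(2)] block_offset_eq(1)[OF v] block_offset_eq(1)[OF w]
        by simp
      then have "f (c * m + v) = f (c * m + w)"
        using block_offset_inj[OF fE[OF pts(1)] fE[OF pts(2)]] eq by (simp add: \<phi>_def)
      then show "v = w" using inj_onD[OF bij_betw_imp_inj_on[OF f] _ pts] by simp
    qed
  qed simp
  ultimately show ?thesis using that \<pi> by blast
qed

definition relabel :: "(nat \<Rightarrow> nat \<Rightarrow> nat) \<Rightarrow> nat \<times> nat \<times> nat \<Rightarrow> nat \<times> nat \<times> nat" where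
  "relabel h t = (h 0 (tri_nth t 0), h 1 (tri_nth t 1), h 2 (tri_nth t 2))"

lemma relabel_eq_case_prod: "relabel h = (\<lambda>(x, y, z). (h 0 x, h 1 y, h 2 z))"
  by (auto simp: relabel_def tri_nth_def)

lemma tri_nth_relabel_conj_triple:
  "d < 3 \<Longrightarrow> tri_nth (relabel h (conj_triple \<sigma> t)) d = h d (tri_nth t (\<sigma> d))"
  by (auto simp: relabel_def conj_triple_def tri_nth_def less_3_iff)

lemma image_triple_points_blockwise:
  assumes \<sigma>: "\<sigma> permutes {..<3}" and t: "t \<in> {1..m} \<times> {1..m} \<times> {1..m}"
  shows "blockwise m (inv \<sigma>) (\<lambda>c. h (inv \<sigma> c)) ` triple_points m t =
    triple_points m (relabel h (conj_triple \<sigma> t))"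
proof -
  let ?f = "blockwise m (inv \<sigma>) (\<lambda>c. h (inv \<sigma> c))"
  have "?f ` triple_points m t = (\<lambda>c. inv \<sigma> c * m + h (inv \<sigma> c) (tri_nth t c)) ` {..<3}"
    unfolding triple_points_def image_image
    using block_offset_eq tri_nth_mem_cube[OF t] by (intro image_cong) (simp_all add: blockwise_def)
  also have "\<dots> = (\<lambda>c. inv \<sigma> c * m + h (inv \<sigma> c) (tri_nth t c)) ` \<sigma> ` {..<3}"
    using permutes_image[OF \<sigma>] by simp
  also have "\<dots> = (\<lambda>d. d * m + tri_nth (relabel h (conj_triple \<sigma> t)) d) ` {..<3}"
    unfolding image_image using tri_nth_relabel_conj_triple permutes_inverses(2)[OF \<sigma>]
    by (intro image_cong) simp_all
  finally show ?thesis unfolding triple_points_def .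
qed

lemma image_latin_circuits_blockwise:
  assumes "latin_square m K" "\<sigma> permutes {..<3}"
  shows "image (blockwise m (inv \<sigma>) (\<lambda>c. h (inv \<sigma> c))) ` latin_circuits m K =
    triple_points m ` (relabel h ` conj_triple \<sigma> ` latin_triples m K)"
  unfolding latin_circuits_eq image_image
  by (intro image_cong refl image_triple_points_blockwise[OF assms(2)]
      subsetD[OF latin_triples_subset[OF assms(1)]])

lemma circuit_bij_if_main_class_isotopic:
  assumes L1: "latin_square m K1" and iso: "main_class_isotopic m K1 K2"
  shows "\<exists>f. bij_betw f {1..3 * m} {1..3 * m} \<and> image f ` latin_circuits m K1 = latin_circuits m K2"
proof -
  obtain \<sigma> \<alpha> \<beta> \<gamma> where \<sigma>: "\<sigma> permutes {..<3}"
    and bij: "bij_betw \<alpha> {1..m} {1..m}" "bij_betw \<beta> {1..m} {1..m}" "bij_betw \<gamma> {1..m} {1..m}"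
    and T: "latin_triples m K2 = (\<lambda>(x, y, z). (\<alpha> x, \<beta> y, \<gamma> z)) ` conj_triple \<sigma> ` latin_triples m K1"
    using iso unfolding main_class_isotopic_def lessThan_3 by blast
  define h where "h d = (if d = 0 then \<alpha> else if d = 1 then \<beta> else \<gamma>)" for d :: nat
  have "(\<lambda>(x, y, z). (\<alpha> x, \<beta> y, \<gamma> z)) = relabel h"
    by (simp add: relabel_eq_case_prod h_def)
  then have "latin_circuits m K2 = image (blockwise m (inv \<sigma>) (\<lambda>c. h (inv \<sigma> c))) ` latin_circuits m K1"
    using T image_latin_circuits_blockwise[OF L1 \<sigma>] by (simp add: latin_circuits_eq)
  moreover have "bij_betw (blockwise m (inv \<sigma>) (\<lambda>c. h (inv \<sigma> c))) {1..3 * m} {1..3 * m}"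
    using bij_betw_blockwise[OF permutes_inv[OF \<sigma>]] bij by (simp add: h_def)
  ultimately show ?thesis by metis
qed

lemma block_preserved_if_circuit_bij:
  assumes L1: "latin_square m K1" and L2: "latin_square m K2"
    and f: "bij_betw f {1..3 * m} {1..3 * m}" and eq: "image f ` latin_circuits m K1 = latin_circuits m K2"
    and x: "x \<in> {1..3 * m}" and y: "y \<in> {1..3 * m}"
  shows "block m (f x) = block m (f y) \<longleftrightarrow> block m x = block m y"
proof (cases "x = y")
  case False
  have "f x \<noteq> f y" "f x \<in> {1..3 * m}" "f y \<in> {1..3 * m}"
    using False x y f by (auto simp: bij_betw_def inj_on_eq_iff)
  moreover have "latin_circuits m K1 \<subseteq> Pow {1..3 * m}" using latin_circuit_subset_card[OF L1] by blast
  ultimately show ?thesis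
    using bij_betw_common_member_iff[OF f eq _ x y] latin_circuits_collinear_iff[OF L1 x y False]
      latin_circuits_collinear_iff[OF L2, of "f x" "f y"] by blast
qed simp

lemma relabel_conj_triple_mem_cube:
  assumes \<sigma>: "\<sigma> permutes {..<3}" and h: "\<And>d. d < 3 \<Longrightarrow> h d ` {1..m} \<subseteq> {1..m}"
    and t: "t \<in> {1..m} \<times> {1..m} \<times> {1..m}"
  shows "relabel h (conj_triple \<sigma> t) \<in> {1..m} \<times> {1..m} \<times> {1..m}"
proof (rule mem_cubeI)
  fix d :: nat assume d: "d < 3"
  then have "tri_nth t (\<sigma> d) \<in> {1..m}"
    using tri_nth_mem_cube[OF t] permutes_in_image[OF \<sigma>] by simp
  then show "tri_nth (relabel h (conj_triple \<sigma> t)) d \<in> {1..m}"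
    unfolding tri_nth_relabel_conj_triple[OF d] using h[OF d] by blast
qed

lemma main_class_isotopic_if_circuit_bij:
  assumes "m > 0" and L1: "latin_square m K1" and L2: "latin_square m K2"
    and f: "bij_betw f {1..3 * m} {1..3 * m}" and eq: "image f ` latin_circuits m K1 = latin_circuits m K2"
  shows "main_class_isotopic m K1 K2"
proof -
  obtain \<pi> \<phi> where \<pi>: "\<pi> permutes {..<3}" and \<phi>: "\<And>c. c < 3 \<Longrightarrow> bij_betw (\<phi> c) {1..m} {1..m}"
    and f_eq: "\<And>x. x \<in> {1..3 * m} \<Longrightarrow> f x = blockwise m \<pi> \<phi> x"
    using blockwise_if_preserves_blocks[OF f \<open>m > 0\<close> block_preserved_if_circuit_bij[OF L1 L2 f eq]]
    by blast
  define \<sigma> where "\<sigma> = inv \<pi>"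
  define h where "h d = \<phi> (\<sigma> d)" for d
  have \<sigma>: "\<sigma> permutes {..<3}" using permutes_inv[OF \<pi>] by (simp add: \<sigma>_def)
  have h: "bij_betw (h d) {1..m} {1..m}" if "d < 3" for d
    using \<phi> permutes_in_image[OF \<sigma>] that by (simp add: h_def)
  have "latin_circuits m K2 = image f ` latin_circuits m K1" using eq by simp
  also have "\<dots> = image (blockwise m \<pi> \<phi>) ` latin_circuits m K1"
    using latin_circuit_subset_card[OF L1] f_eq by (intro image_cong refl) (simp add: subset_iff)
  also have "blockwise m \<pi> \<phi> = blockwise m (inv \<sigma>) (\<lambda>c. h (inv \<sigma> c))"
    using permutes_inv_inv[OF \<pi>] permutes_inverses(2)[OF \<pi>] by (simp add: \<sigma>_def h_def)
  also have "image \<dots> ` latin_circuits m K1 = triple_points m ` (relabel h ` conj_triple \<sigma> ` latin_triples m K1)"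
    by (rule image_latin_circuits_blockwise[OF L1 \<sigma>])
  finally have circuits: "latin_circuits m K2 = triple_points m ` (relabel h ` conj_triple \<sigma> ` latin_triples m K1)" .
  have "relabel h ` conj_triple \<sigma> ` latin_triples m K1 \<subseteq> {1..m} \<times> {1..m} \<times> {1..m}"
    using relabel_conj_triple_mem_cube[OF \<sigma>] bij_betw_imp_surj_on[OF h] latin_triples_subset[OF L1]
    by blast
  then have T: "latin_triples m K2 = relabel h ` conj_triple \<sigma> ` latin_triples m K1"
    using circuits unfolding latin_circuits_eq
    by (rule iffD1[OF inj_on_image_eq_iff[OF inj_on_triple_points latin_triples_subset[OF L2]]])
  show ?thesis
    unfolding main_class_isotopic_def
  proof (intro exI conjI)
    show "\<sigma> permutes {0, 1, 2}" using \<sigma> by (simp add: lessThan_3)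
    show "latin_triples m K2 = (\<lambda>(x, y, z). (h 0 x, h 1 y, h 2 z)) ` conj_triple \<sigma> ` latin_triples m K1"
      using T by (simp add: relabel_eq_case_prod)
  qed (use h in auto)
qed

lemma main_class_isotopic_iff_circuit_bij:
  assumes "m > 0" "latin_square m K1" "latin_square m K2"
  shows "main_class_isotopic m K1 K2 \<longleftrightarrow>
    (\<exists>f. bij_betw f {1..3 * m} {1..3 * m} \<and> image f ` latin_circuits m K1 = latin_circuits m K2)"
  using circuit_bij_if_main_class_isotopic[OF assms(2)] main_class_isotopic_if_circuit_bij[OF assms]
  by (intro iffI) auto

theorem mainTheorem4:
  fixes m :: nat and K1 K2 :: "nat \<Rightarrow> nat \<Rightarrow> nat"
  assumes "m \<ge> 2" and "latin_square m K1" and "latin_square m K2"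
  shows "(main_class_isotopic m K1 K2 \<longrightarrow>
            matroid_iso {1..3*m} (latin_matroid m K1) {1..3*m} (latin_matroid m K2)) \<and>
         (\<not> main_class_isotopic m K1 K2 \<longrightarrow>
            \<not> matroid_iso {1..3*m} (latin_matroid m K1) {1..3*m} (latin_matroid m K2))"
proof -
  have "matroid_iso {1..3*m} (latin_matroid m K1) {1..3*m} (latin_matroid m K2) \<longleftrightarrow>
      (\<exists>f. bij_betw f {1..3 * m} {1..3 * m} \<and> image f ` latin_circuits m K1 = latin_circuits m K2)"
    unfolding latin_matroid_eq[OF assms(2,1)] latin_matroid_eq[OF assms(3,1)]
    by (intro matroid_iso_rank3_indep_iff latin_circuit_subset_card[OF assms(2)] latin_circuit_subset_card[OF assms(3)])
  also have "\<dots> \<longleftrightarrow> main_class_isotopic m K1 K2"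
    using main_class_isotopic_iff_circuit_bij assms by simp
  finally show ?thesis by simp
qed

end
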